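(* Let $f:\mathbb{R}^d\to\mathbb{R}$ be $L$-smooth. Let $X\subseteq\mathbb{R}^d$ be a set with $\mathcal{L}(X)=0$ (for example, a finite set of points), and let $W\subseteq\mathbb{R}^d$ be a set with $\mathcal{L}(W)>0$. Run gradient descent $x_t=x_{t-1}-\gamma\nabla f(x_{t-1})$, $t=1,2,\dots$, with learning rate $\gamma\le\frac{1}{2L}$ and $x_0$ drawn uniformly at random from $W$. Then the probability that $x_t\in X$ for some $t$ during training is $0$.
   Context: $\mathcal{L}(S)$ denotes the Lebesgue measure of $S\subseteq\mathbb{R}^d$. A function $f$ is $L$-smooth if it is differentiable and there is a constant $L>0$ with $\|\nabla f(x)-\nabla f(y)\|\le L\|x-y\|$ for all $x,y\in\mathbb{R}^d$. "Random initialization over $W$" means $x_0$ is sampled uniformly from $W$. *)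

theory Defs
  imports "HOL-Analysis.Analysis"
begin

definition L_smooth :: "('a::euclidean_space \<Rightarrow> real) \<Rightarrow> ('a \<Rightarrow> 'a) \<Rightarrow> real \<Rightarrow> bool" where
  "L_smooth f grad L \<longleftrightarrow> L > 0 \<and>
     (\<forall>x. (f has_derivative (\<lambda>h. grad x \<bullet> h)) (at x)) \<and>
     (\<forall>x y. norm (grad x - grad y) \<le> L * norm (x - y))"

definition gd_iter :: "('a::real_vector \<Rightarrow> 'a) \<Rightarrow> real \<Rightarrow> 'a \<Rightarrow> nat \<Rightarrow> 'a" where
  "gd_iter grad \<gamma> x0 t = ((\<lambda>x. x - \<gamma> *\<^sub>R grad x) ^^ t) x0"

end

theory Submission
  imports Defs
begin

text \<open>Since \<open>\<gamma> L < 1\<close>, the gradient step \<open>g x = x - \<gamma> \<nabla>f x\<close> satisfies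
  \<open>(1 - \<gamma> L) \<parallel>x - y\<parallel> \<le> \<parallel>g x - g y\<parallel>\<close>. So \<open>g\<close> is injective with a Lipschitz inverse on its
  range, and the preimage under \<open>g\<close> of a null set \<open>N\<close> is the image of \<open>N \<inter> range g\<close> under
  that inverse, again a null set. By induction all preimages of \<open>X\<close> under the iterates
  \<open>g\<^sup>t\<close> are null, and so is their countable union: the starting points that ever hit \<open>X\<close>.\<close>

lemma gradient_step_expanding:
  fixes grad :: "'a::real_normed_vector \<Rightarrow> 'a"
  assumes lip: "\<And>x y. norm (grad x - grad y) \<le> L * norm (x - y)" and "0 \<le> \<gamma>"
  shows "(1 - \<gamma> * L) * norm (x - y) \<le> norm ((x - \<gamma> *\<^sub>R grad x) - (y - \<gamma> *\<^sub>R grad y))"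
proof -
  have "norm (\<gamma> *\<^sub>R (grad x - grad y)) \<le> \<gamma> * (L * norm (x - y))"
    using lip \<open>0 \<le> \<gamma>\<close> by (simp add: mult_left_mono)
  moreover have "norm (x - y) - norm (\<gamma> *\<^sub>R (grad x - grad y))
      \<le> norm ((x - y) - \<gamma> *\<^sub>R (grad x - grad y))"
    by (rule norm_triangle_ineq2)
  moreover have "(x - y) - \<gamma> *\<^sub>R (grad x - grad y) = (x - \<gamma> *\<^sub>R grad x) - (y - \<gamma> *\<^sub>R grad y)"
    by (simp add: algebra_simps)
  ultimately show ?thesis
    by (simp add: algebra_simps)
qed

lemma negligible_vimage_expanding:
  fixes g :: "'a::euclidean_space \<Rightarrow> 'a"
  assumes "0 < c" and expanding: "\<And>x y. c * norm (x - y) \<le> norm (g x - g y)"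
    and "negligible N"
  shows "negligible (g -` N)"
proof -
  have "inj g"
  proof (rule injI)
    fix x y assume "g x = g y"
    then have "c * norm (x - y) \<le> 0"
      using expanding[of x y] by simp
    then show "x = y"
      using \<open>0 < c\<close> by (simp add: mult_le_0_iff)
  qed
  then have inv_g: "inv g (g x) = x" for x
    by simp
  have "negligible (inv g ` (N \<inter> range g))"
  proof (rule negligible_locally_Lipschitz_image)
    show "negligible (N \<inter> range g)"
      using \<open>negligible N\<close> negligible_Int by blast
    fix u assume "u \<in> N \<inter> range g"
    then obtain x where u: "u = g x" by auto
    have "norm (inv g v - inv g u) \<le> 1 / c * norm (v - u)" if "v \<in> range g" for v
    proof -
      obtain y where v: "v = g y" using \<open>v \<in> range g\<close> by auto
      show ?thesis
        using expanding[of y x] \<open>0 < c\<close> by (simp add: u v inv_g field_simps)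
    qed
    then show "\<exists>T B. open T \<and> u \<in> T \<and>
        (\<forall>v \<in> (N \<inter> range g) \<inter> T. norm (inv g v - inv g u) \<le> B * norm (v - u))"
      by (intro exI[of _ UNIV] exI[of _ "1 / c"]) auto
  qed simp
  moreover have "g -` N \<subseteq> inv g ` (N \<inter> range g)"
    by (metis IntI image_eqI inv_g rangeI subsetI vimageE)
  ultimately show ?thesis
    by (rule negligible_subset)
qed

lemma negligible_vimage_funpow:
  fixes g :: "'a::euclidean_space \<Rightarrow> 'a"
  assumes vimage: "\<And>N. negligible N \<Longrightarrow> negligible (g -` N)" and "negligible N"
  shows "negligible ((g ^^ n) -` N)"
proof (induction n)
  case 0
  show ?case using \<open>negligible N\<close> by simp
next
  case (Suc n)
  have "(g ^^ Suc n) -` N = g -` ((g ^^ n) -` N)"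
    by (simp only: funpow_Suc_right vimage_comp)
  with vimage[OF Suc] show ?case
    by (simp only:)
qed

theorem corollary1:
  fixes f :: "'a::euclidean_space \<Rightarrow> real" and grad :: "'a \<Rightarrow> 'a"
    and L \<gamma> :: real and X W :: "'a set"
  assumes "L_smooth f grad L"
    and "X \<in> null_sets lebesgue"
    and "W \<in> sets lebesgue" and "0 < emeasure lebesgue W" and "emeasure lebesgue W < \<infinity>"
    and "0 < \<gamma>" and "\<gamma> \<le> 1 / (2 * L)"
  shows "AE x0 in uniform_measure lebesgue W. \<forall>t. gd_iter grad \<gamma> x0 t \<notin> X"
proof -
  define step where "step = (\<lambda>x::'a. x - \<gamma> *\<^sub>R grad x)"
  have "0 < L" and lip: "\<And>x y. norm (grad x - grad y) \<le> L * norm (x - y)"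
    using \<open>L_smooth f grad L\<close> unfolding L_smooth_def by auto
  then have "\<gamma> * L < 1"
    using \<open>\<gamma> \<le> 1 / (2 * L)\<close> by (simp add: field_simps)
  have "(1 - \<gamma> * L) * norm (x - y) \<le> norm (step x - step y)" for x y
    unfolding step_def using gradient_step_expanding[OF lip] \<open>0 < \<gamma>\<close> by simp
  then have "negligible ((step ^^ t) -` X)" for t
    using \<open>\<gamma> * L < 1\<close> \<open>X \<in> null_sets lebesgue\<close>
    by (intro negligible_vimage_funpow negligible_vimage_expanding[of "1 - \<gamma> * L"])
      (auto simp: negligible_iff_null_sets)
  then have "negligible (\<Union>t. (step ^^ t) -` X)"
    by (intro negligible_countable_Union) auto
  then have "(\<Union>t. (step ^^ t) -` X) \<in> null_sets lebesgue"
    by (simp add: negligible_iff_null_sets)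
  then have "AE x in lebesgue. x \<in> W \<longrightarrow> (\<forall>t. gd_iter grad \<gamma> x t \<notin> X)"
    by (rule AE_I') (auto simp: gd_iter_def step_def)
  then show ?thesis
    by (rule AE_uniform_measureI[OF \<open>W \<in> sets lebesgue\<close>])
qed

end
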